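(* For any integer $t\geq 4$, there exist a connected graph $G$ and a function $g:V(G_1)\to V(G_2)$ such that $Dist(G)+Dist(F_G)=t$.
   Context: $Dist(H)$ is the least $t$ such that $H$ has a labeling $V(H)\to\{1,\dots,t\}$ preserved by no non-identity automorphism of $H$. Functigraph: for disjoint copies $G_1,G_2$ of a connected graph $G$ and a function $g:V(G_1)\to V(G_2)$, $F_G$ has vertex set $V(G_1)\cup V(G_2)$ and edge set $E(G_1)\cup E(G_2)\cup\{uv: u\in V(G_1),\ g(u)=v\}$. *)

theory Defs
  imports Main "HOL-Library.FuncSet"
begin

definition graph :: "'a set \<Rightarrow> ('a \<Rightarrow> 'a \<Rightarrow> bool) \<Rightarrow> bool" where
  "graph V E \<longleftrightarrow> finite V \<and> (\<forall>u v. E u v \<longrightarrow> u \<in> V \<and> v \<in> V)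
     \<and> (\<forall>u v. E u v \<longrightarrow> E v u) \<and> (\<forall>u. \<not> E u u)"

definition connected_graph :: "'a set \<Rightarrow> ('a \<Rightarrow> 'a \<Rightarrow> bool) \<Rightarrow> bool" where
  "connected_graph V E \<longleftrightarrow> graph V E \<and> V \<noteq> {} \<and> (\<forall>u\<in>V. \<forall>v\<in>V. E\<^sup>*\<^sup>* u v)"

definition automorphism :: "'a set \<Rightarrow> ('a \<Rightarrow> 'a \<Rightarrow> bool) \<Rightarrow> ('a \<Rightarrow> 'a) \<Rightarrow> bool" where
  "automorphism V E \<sigma> \<longleftrightarrow> bij_betw \<sigma> V V \<and> (\<forall>u\<in>V. \<forall>v\<in>V. E u v \<longleftrightarrow> E (\<sigma> u) (\<sigma> v))"

definition distinguishing :: "'a set \<Rightarrow> ('a \<Rightarrow> 'a \<Rightarrow> bool) \<Rightarrow> ('a \<Rightarrow> nat) \<Rightarrow> bool" where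
  "distinguishing V E c \<longleftrightarrow>
     (\<forall>\<sigma>. automorphism V E \<sigma> \<and> (\<forall>v\<in>V. c (\<sigma> v) = c v) \<longrightarrow> (\<forall>v\<in>V. \<sigma> v = v))"

definition Dist :: "'a set \<Rightarrow> ('a \<Rightarrow> 'a \<Rightarrow> bool) \<Rightarrow> nat" where
  "Dist V E = (LEAST t. \<exists>c. (\<forall>v\<in>V. c v \<in> {1..t}) \<and> distinguishing V E c)"

text \<open>Functigraph: G_1 = Inl-copy, G_2 = Inr-copy, g maps V(G_1) to V(G_2)
  (represented as a function V \<Rightarrow> V, Inl u joined to Inr (g u)).\<close>
definition fg_V :: "'a set \<Rightarrow> ('a + 'a) set" where
  "fg_V V = Inl ` V \<union> Inr ` V"

fun fg_E :: "'a set \<Rightarrow> ('a \<Rightarrow> 'a \<Rightarrow> bool) \<Rightarrow> ('a \<Rightarrow> 'a) \<Rightarrow> ('a + 'a) \<Rightarrow> ('a + 'a) \<Rightarrow> bool" where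
  "fg_E V E g (Inl a) (Inl b) = E a b"
| "fg_E V E g (Inr a) (Inr b) = E a b"
| "fg_E V E g (Inl a) (Inr b) = (a \<in> V \<and> b \<in> V \<and> g a = b)"
| "fg_E V E g (Inr a) (Inl b) = (a \<in> V \<and> b \<in> V \<and> g b = a)"

end

theory Submission
  imports Defs "HOL-Combinatorics.Transposition"
begin

text \<open>Take \<open>G = K\<^sub>n\<close>. Two twins (vertices with the same neighbours outside the pair) are
  exchanged by an automorphism, so a distinguishing labeling is injective on every set of pairwise
  twins. This gives \<open>Dist(K\<^sub>n) \<ge> n\<close> and, in a functigraph, \<open>Dist(F\<^sub>G) \<ge>\<close> the size of the largest
  fibre of \<open>g\<close>, since the copies in \<open>G\<^sub>1\<close> of vertices with a common image are twins. The matching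
  labelings are distinguishing because, together with automorphism invariants (the degree, and the
  set of degrees of the neighbours), they determine each vertex. With \<open>g\<close> constant this yields
  \<open>Dist(F\<^sub>G) = n\<close>; with \<open>g\<close> mapping \<open>0\<close> to \<open>1\<close> and everything else to \<open>0\<close> (for \<open>n \<ge> 3\<close>) it yields
  \<open>Dist(F\<^sub>G) = n - 1\<close>. So every \<open>t = n + n\<close> and \<open>t = n + (n - 1)\<close> is attained.\<close>

definition neighbours :: "'a set \<Rightarrow> ('a \<Rightarrow> 'a \<Rightarrow> bool) \<Rightarrow> 'a \<Rightarrow> 'a set" where
  "neighbours V E v = {w \<in> V. E v w}"

definition degree :: "'a set \<Rightarrow> ('a \<Rightarrow> 'a \<Rightarrow> bool) \<Rightarrow> 'a \<Rightarrow> nat" where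
  "degree V E v = card (neighbours V E v)"

lemma automorphismD:
  assumes "automorphism V E \<sigma>"
  shows "x \<in> V \<Longrightarrow> \<sigma> x \<in> V" and "inj_on \<sigma> V" and "\<sigma> ` V = V"
    and "x \<in> V \<Longrightarrow> y \<in> V \<Longrightarrow> E (\<sigma> x) (\<sigma> y) \<longleftrightarrow> E x y"
  using assms unfolding automorphism_def bij_betw_def by auto

lemma neighbours_automorphism:
  assumes "automorphism V E \<sigma>" and "v \<in> V"
  shows "neighbours V E (\<sigma> v) = \<sigma> ` neighbours V E v"
proof -
  have "neighbours V E (\<sigma> v) = {w \<in> \<sigma> ` V. E (\<sigma> v) w}"
    using automorphismD(3)[OF assms(1)] by (simp add: neighbours_def)
  also have "\<dots> = \<sigma> ` {w \<in> V. E (\<sigma> v) (\<sigma> w)}"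
    by blast
  also have "\<dots> = \<sigma> ` neighbours V E v"
    using automorphismD(4)[OF assms(1) assms(2)] by (auto simp: neighbours_def)
  finally show ?thesis .
qed

lemma degree_automorphism:
  assumes "automorphism V E \<sigma>" and "v \<in> V"
  shows "degree V E (\<sigma> v) = degree V E v"
proof -
  have "inj_on \<sigma> (neighbours V E v)"
    using automorphismD(2)[OF assms(1)] by (rule inj_on_subset) (auto simp: neighbours_def)
  then show ?thesis
    by (simp add: degree_def neighbours_automorphism[OF assms] card_image)
qed

lemma degree_image_neighbours_automorphism:
  assumes "automorphism V E \<sigma>" and "v \<in> V"
  shows "degree V E ` neighbours V E (\<sigma> v) = degree V E ` neighbours V E v"
proof -
  have "degree V E (\<sigma> w) = degree V E w" if "w \<in> neighbours V E v" for w
    using that assms(1) by (intro degree_automorphism) (auto simp: neighbours_def)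
  then show ?thesis
    by (simp add: neighbours_automorphism[OF assms] image_image cong: image_cong)
qed

lemma distinguishingI_invariant:
  assumes invariant: "\<And>\<sigma> v. automorphism V E \<sigma> \<Longrightarrow> v \<in> V \<Longrightarrow> f (\<sigma> v) = f v"
    and separates: "inj_on (\<lambda>v. (c v, f v)) V"
  shows "distinguishing V E c"
  unfolding distinguishing_def
proof (intro allI impI ballI)
  fix \<sigma> v
  assume "automorphism V E \<sigma> \<and> (\<forall>v\<in>V. c (\<sigma> v) = c v)" and v: "v \<in> V"
  then have "automorphism V E \<sigma>" and "c (\<sigma> v) = c v" by auto
  with v show "\<sigma> v = v"
    using invariant inj_onD[OF separates] automorphismD(1) by fastforce
qed

definition twins :: "'a set \<Rightarrow> ('a \<Rightarrow> 'a \<Rightarrow> bool) \<Rightarrow> 'a \<Rightarrow> 'a \<Rightarrow> bool" where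
  "twins V E u v \<longleftrightarrow> (\<forall>w \<in> V - {u, v}. E u w \<longleftrightarrow> E v w)"

lemma automorphism_transpose_twins:
  assumes "graph V E" and "u \<in> V" "v \<in> V" and "twins V E u v"
  shows "automorphism V E (transpose u v)"
proof -
  have sym: "E x y \<Longrightarrow> E y x" and irrefl: "\<not> E x x" for x y
    using assms(1) unfolding graph_def by blast+
  have twin_left: "E u w \<longleftrightarrow> E v w" if "w \<in> V - {u, v}" for w
    using assms(4) that unfolding twins_def by blast
  have twin_right: "E w u \<longleftrightarrow> E w v" if "w \<in> V - {u, v}" for w
    using twin_left[OF that] sym by blast
  have "E x y \<longleftrightarrow> E (transpose u v x) (transpose u v y)" if "x \<in> V" "y \<in> V" for x y
  proof (cases "x \<in> {u, v}"; cases "y \<in> {u, v}")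
    assume "x \<in> {u, v}" "y \<in> {u, v}"
    then show ?thesis using sym irrefl by auto
  next
    assume "x \<in> {u, v}" "y \<notin> {u, v}"
    then show ?thesis using twin_left[of y] \<open>y \<in> V\<close> by auto
  next
    assume "x \<notin> {u, v}" "y \<in> {u, v}"
    then show ?thesis using twin_right[of x] \<open>x \<in> V\<close> by auto
  next
    assume "x \<notin> {u, v}" "y \<notin> {u, v}"
    then show ?thesis by simp
  qed
  then show ?thesis
    using assms(2,3) by (simp add: automorphism_def)
qed

lemma distinguishing_inj_on_twins:
  assumes "graph V E" and "S \<subseteq> V" and "\<forall>u\<in>S. \<forall>v\<in>S. twins V E u v"
    and "distinguishing V E c"
  shows "inj_on c S"
proof (rule inj_onI, rule ccontr)
  fix u v assume uv: "u \<in> S" "v \<in> S" "c u = c v" "u \<noteq> v"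
  have "automorphism V E (transpose u v)"
    using assms(1-3) uv by (intro automorphism_transpose_twins) auto
  moreover have "\<forall>x\<in>V. c (transpose u v x) = c x"
    using uv(3) by (simp add: transpose_def)
  ultimately have "\<forall>x\<in>V. transpose u v x = x"
    using assms(4) unfolding distinguishing_def by blast
  then have "transpose u v u = u"
    using assms(2) uv(1) by blast
  with uv(4) show False by simp
qed

lemma Dist_eq_card_twins:
  assumes "graph V E" and "S \<subseteq> V" and "\<forall>u\<in>S. \<forall>v\<in>S. twins V E u v"
    and "card S = m" and "\<forall>v\<in>V. c v \<in> {1..m}" and "distinguishing V E c"
  shows "Dist V E = m"
  unfolding Dist_def
proof (rule Least_equality)
  show "\<exists>c. (\<forall>v\<in>V. c v \<in> {1..m}) \<and> distinguishing V E c"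
    using assms(5,6) by blast
next
  fix t assume "\<exists>c. (\<forall>v\<in>V. c v \<in> {1..t}) \<and> distinguishing V E c"
  then obtain c' where range: "\<forall>v\<in>V. c' v \<in> {1..t}" and "distinguishing V E c'" by blast
  then have "inj_on c' S"
    using assms(1-3) by (intro distinguishing_inj_on_twins)
  then have "card S = card (c' ` S)" by (simp add: card_image)
  also have "\<dots> \<le> card {1..t}"
    using range assms(2) by (intro card_mono) auto
  finally show "m \<le> t" using assms(4) by simp
qed

lemma Inl_in_fg_V [simp]: "Inl x \<in> fg_V V \<longleftrightarrow> x \<in> V"
  and Inr_in_fg_V [simp]: "Inr x \<in> fg_V V \<longleftrightarrow> x \<in> V"
  by (auto simp: fg_V_def)

lemma graph_functigraph:
  assumes "graph V E"
  shows "graph (fg_V V) (fg_E V E g)"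
proof -
  have "fg_E V E g x y \<Longrightarrow> x \<in> fg_V V \<and> y \<in> fg_V V \<and> fg_E V E g y x" for x y
    using assms by (cases x; cases y) (auto simp: graph_def)
  moreover have "\<not> fg_E V E g x x" for x
    using assms by (cases x) (auto simp: graph_def)
  moreover have "finite (fg_V V)"
    using assms by (simp add: fg_V_def graph_def)
  ultimately show ?thesis
    unfolding graph_def by blast
qed

lemma neighbours_fg_Inl:
  assumes "g \<in> V \<rightarrow> V" and "i \<in> V"
  shows "neighbours (fg_V V) (fg_E V E g) (Inl i) = insert (Inr (g i)) (Inl ` neighbours V E i)"
proof -
  have "w \<in> neighbours (fg_V V) (fg_E V E g) (Inl i) \<longleftrightarrow> w \<in> insert (Inr (g i)) (Inl ` neighbours V E i)"
    for w
    using assms by (cases w) (auto simp: neighbours_def)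
  then show ?thesis by blast
qed

lemma neighbours_fg_Inr:
  assumes "j \<in> V"
  shows "neighbours (fg_V V) (fg_E V E g) (Inr j) = Inr ` neighbours V E j \<union> Inl ` {i \<in> V. g i = j}"
proof -
  have "w \<in> neighbours (fg_V V) (fg_E V E g) (Inr j) \<longleftrightarrow> w \<in> Inr ` neighbours V E j \<union> Inl ` {i \<in> V. g i = j}"
    for w
    using assms by (cases w) (auto simp: neighbours_def)
  then show ?thesis by blast
qed

lemma degree_fg_Inl:
  assumes "graph V E" and "g \<in> V \<rightarrow> V" and "i \<in> V"
  shows "degree (fg_V V) (fg_E V E g) (Inl i) = Suc (degree V E i)"
proof -
  have "finite (neighbours V E i)"
    using assms(1) by (simp add: graph_def neighbours_def)
  then show ?thesis
    by (simp add: degree_def neighbours_fg_Inl[OF assms(2,3)] card_insert_if card_image image_iff)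
qed

lemma degree_fg_Inr:
  assumes "graph V E" and "j \<in> V"
  shows "degree (fg_V V) (fg_E V E g) (Inr j) = degree V E j + card {i \<in> V. g i = j}"
proof -
  have "finite (neighbours V E j)" and "finite {i \<in> V. g i = j}"
    using assms(1) by (simp_all add: graph_def neighbours_def)
  moreover have "Inr ` neighbours V E j \<inter> Inl ` {i \<in> V. g i = j} = {}"
    by blast
  ultimately show ?thesis
    by (simp add: degree_def neighbours_fg_Inr[OF assms(2)] card_Un_disjoint card_image)
qed

lemma twins_fg_Inl:
  assumes "twins V E i k" and "g i = g k" and "i \<in> V" "k \<in> V"
  shows "twins (fg_V V) (fg_E V E g) (Inl i) (Inl k)"
proof -
  have "fg_E V E g (Inl i) w \<longleftrightarrow> fg_E V E g (Inl k) w" if "w \<in> fg_V V - {Inl i, Inl k}" for w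
    using assms that by (cases w) (auto simp: twins_def)
  then show ?thesis by (simp add: twins_def)
qed

definition complete_adj :: "nat \<Rightarrow> nat \<Rightarrow> nat \<Rightarrow> bool" where
  "complete_adj n a b \<longleftrightarrow> a \<noteq> b \<and> a < n \<and> b < n"

lemma graph_complete: "graph {..<n} (complete_adj n)"
  by (auto simp: graph_def complete_adj_def)

lemma connected_complete:
  assumes "0 < n"
  shows "connected_graph {..<n} (complete_adj n)"
proof -
  have "(complete_adj n)\<^sup>*\<^sup>* u v" if "u < n" "v < n" for u v
    using that by (cases "u = v") (auto simp: complete_adj_def)
  then show ?thesis
    using assms graph_complete by (auto simp: connected_graph_def)
qed

lemma neighbours_complete:
  assumes "i < n"
  shows "neighbours {..<n} (complete_adj n) i = {..<n} - {i}"
  using assms by (auto simp: neighbours_def complete_adj_def)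

lemma degree_complete:
  assumes "i < n"
  shows "degree {..<n} (complete_adj n) i = n - 1"
  using assms by (simp add: degree_def neighbours_complete)

lemma twins_complete:
  assumes "i < n" "k < n"
  shows "twins {..<n} (complete_adj n) i k"
  using assms by (auto simp: twins_def complete_adj_def)

lemma Dist_complete:
  assumes "0 < n"
  shows "Dist {..<n} (complete_adj n) = n"
proof (rule Dist_eq_card_twins[where S = "{..<n}" and c = Suc])
  show "distinguishing {..<n} (complete_adj n) Suc"
    by (simp add: distinguishing_def)
qed (use graph_complete twins_complete in auto)

abbreviation complete_fg_V :: "nat \<Rightarrow> (nat + nat) set" where
  "complete_fg_V n \<equiv> fg_V {..<n}"

abbreviation complete_fg_E :: "nat \<Rightarrow> (nat \<Rightarrow> nat) \<Rightarrow> nat + nat \<Rightarrow> nat + nat \<Rightarrow> bool" where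
  "complete_fg_E n g \<equiv> fg_E {..<n} (complete_adj n) g"

lemma degree_complete_fg_Inl:
  assumes "g \<in> {..<n} \<rightarrow> {..<n}" and "i < n"
  shows "degree (complete_fg_V n) (complete_fg_E n g) (Inl i) = n"
  using assms by (simp add: degree_fg_Inl graph_complete degree_complete)

lemma degree_complete_fg_Inr:
  assumes "j < n"
  shows "degree (complete_fg_V n) (complete_fg_E n g) (Inr j) = n - 1 + card {i \<in> {..<n}. g i = j}"
  using assms by (simp add: degree_fg_Inr graph_complete degree_complete)

lemma Dist_complete_fg_const:
  assumes "2 \<le> n"
  shows "Dist (complete_fg_V n) (complete_fg_E n (\<lambda>_. 0)) = n"
proof -
  let ?V = "complete_fg_V n" and ?E = "complete_fg_E n (\<lambda>_. 0)"
  let ?c = "case_sum Suc Suc :: nat + nat \<Rightarrow> nat"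
  have deg_Inl: "degree ?V ?E (Inl i) = n" if "i < n" for i
    using that by (simp add: degree_complete_fg_Inl)
  have deg_Inr: "degree ?V ?E (Inr j) = (if j = 0 then n + n - 1 else n - 1)" if "j < n" for j
    using that assms by (simp add: degree_complete_fg_Inr)
  have distinguishing: "distinguishing ?V ?E ?c"
  proof (rule distinguishingI_invariant[where f = "degree ?V ?E"])
    show "degree ?V ?E (\<sigma> v) = degree ?V ?E v" if "automorphism ?V ?E \<sigma>" "v \<in> ?V" for \<sigma> v
      using that by (rule degree_automorphism)
    show "inj_on (\<lambda>v. (?c v, degree ?V ?E v)) ?V"
    proof (rule inj_onI)
      fix x y assume "x \<in> ?V" "y \<in> ?V" "(?c x, degree ?V ?E x) = (?c y, degree ?V ?E y)"
      then show "x = y"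
        using assms by (cases x; cases y) (auto simp: deg_Inl deg_Inr split: if_splits)
    qed
  qed
  have labels: "\<forall>v\<in>?V. ?c v \<in> {1..n}"
    by (auto split: sum.split)
  show ?thesis
    by (rule Dist_eq_card_twins[OF graph_functigraph[OF graph_complete] _ _ _ labels distinguishing,
          where S = "Inl ` {..<n}"])
      (auto simp: twins_fg_Inl twins_complete card_image)
qed

definition zero_except_first :: "nat \<Rightarrow> nat" where
  "zero_except_first i = (if i = 0 then 1 else 0)"

lemma zero_except_first_funcset: "1 < n \<Longrightarrow> zero_except_first \<in> {..<n} \<rightarrow> {..<n}"
  by (auto simp: zero_except_first_def)

lemma degree_complete_fg_zero_except_first_Inr:
  assumes "3 \<le> n" and "j < n"
  shows "degree (complete_fg_V n) (complete_fg_E n zero_except_first) (Inr j)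
    = (if j = 0 then n + n - 2 else if j = 1 then n else n - 1)"
proof -
  have "{i \<in> {..<n}. zero_except_first i = j} = (if j = 0 then {1..<n} else if j = 1 then {0} else {})"
    using assms by (auto simp: zero_except_first_def)
  then show ?thesis
    using assms by (simp add: degree_complete_fg_Inr) arith
qed

text \<open>These facts separate the four vertices \<open>Inl 0, Inl 1, Inr 0, Inr 1\<close> that share the label \<open>1\<close>
  below: \<open>Inr 0\<close> is the only vertex of degree \<open>n + n - 2\<close>, and the degree \<open>n - 1\<close> occurs only in \<open>G\<^sub>2\<close>.\<close>

lemma neighbour_degrees_complete_fg_zero_except_first:
  fixes n :: nat
  defines "D \<equiv> degree (complete_fg_V n) (complete_fg_E n zero_except_first)"
    and "N \<equiv> neighbours (complete_fg_V n) (complete_fg_E n zero_except_first)"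
  assumes n: "3 \<le> n"
  shows "n + n - 2 \<in> D ` N (Inl 1)" and "n + n - 2 \<notin> D ` N (Inl 0)"
    and "n - 1 \<in> D ` N (Inr 1)" and "i < n \<Longrightarrow> n - 1 \<notin> D ` N (Inl i)"
proof -
  have g: "zero_except_first \<in> {..<n} \<rightarrow> {..<n}"
    using n by (simp add: zero_except_first_funcset)
  have nbr_Inl: "N (Inl i) = insert (Inr (zero_except_first i)) (Inl ` ({..<n} - {i}))"
    if "i < n" for i
    unfolding N_def using that g by (simp add: neighbours_fg_Inl neighbours_complete)
  have deg_Inl: "D (Inl i) = n" if "i < n" for i
    unfolding D_def using g that by (rule degree_complete_fg_Inl)
  note deg_Inr = degree_complete_fg_zero_except_first_Inr[OF n, folded D_def]
  show "n + n - 2 \<in> D ` N (Inl 1)"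
    using n by (force simp: nbr_Inl deg_Inr zero_except_first_def)
  show "n + n - 2 \<notin> D ` N (Inl 0)"
    using n by (auto simp: nbr_Inl deg_Inl deg_Inr zero_except_first_def)
  have "Inr 2 \<in> N (Inr 1)"
    unfolding N_def using n by (simp add: neighbours_fg_Inr neighbours_complete)
  then show "n - 1 \<in> D ` N (Inr 1)"
    using n deg_Inr[of 2] by force
  show "n - 1 \<notin> D ` N (Inl i)" if "i < n"
    using that n by (auto simp: nbr_Inl deg_Inl deg_Inr zero_except_first_def)
qed

lemma Dist_complete_fg_zero_except_first:
  assumes "3 \<le> n"
  shows "Dist (complete_fg_V n) (complete_fg_E n zero_except_first) = n - 1"
proof -
  let ?V = "complete_fg_V n" and ?E = "complete_fg_E n zero_except_first"
  let ?D = "degree ?V ?E" and ?N = "neighbours ?V ?E"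
  let ?c = "case_sum (max 1) (max 1) :: nat + nat \<Rightarrow> nat"
  have g: "zero_except_first \<in> {..<n} \<rightarrow> {..<n}"
    using assms by (simp add: zero_except_first_funcset)
  note deg_Inl = degree_complete_fg_Inl[OF g]
  note deg_Inr = degree_complete_fg_zero_except_first_Inr[OF assms]
  note nbr_degs = neighbour_degrees_complete_fg_zero_except_first[OF assms]
  have Inl_eqI: "i = k"
    if "max 1 i = max 1 k" "?D ` ?N (Inl i) = ?D ` ?N (Inl k)" for i k
  proof (rule ccontr)
    assume "i \<noteq> k"
    with that(1) have "{i, k} = {0, 1}" by auto
    then show False
      using that(2) nbr_degs(1,2) by (auto simp: doubleton_eq_iff)
  qed
  have Inr_eqI: "j = k" if "j < n" "k < n" "max 1 j = max 1 k" "?D (Inr j) = ?D (Inr k)" for j k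
    using that assms by (auto simp: deg_Inr split: if_splits)
  have Inl_neq_Inr: False
    if "i < n" "j < n" "max 1 i = max 1 j" "?D (Inl i) = ?D (Inr j)"
      "?D ` ?N (Inl i) = ?D ` ?N (Inr j)" for i j
  proof -
    have "j = 1"
      using that(1,2,4) assms by (auto simp: deg_Inl deg_Inr split: if_splits)
    then show False
      using that(5) nbr_degs(3) nbr_degs(4)[OF that(1)] by simp
  qed
  have distinguishing: "distinguishing ?V ?E ?c"
  proof (rule distinguishingI_invariant[where f = "\<lambda>v. (?D v, ?D ` ?N v)"])
    show "(?D (\<sigma> v), ?D ` ?N (\<sigma> v)) = (?D v, ?D ` ?N v)"
      if "automorphism ?V ?E \<sigma>" "v \<in> ?V" for \<sigma> v
      using that by (simp add: degree_automorphism degree_image_neighbours_automorphism)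
    show "inj_on (\<lambda>v. (?c v, ?D v, ?D ` ?N v)) ?V"
    proof (rule inj_onI)
      fix x y
      assume xy: "x \<in> ?V" "y \<in> ?V" and eq: "(?c x, ?D x, ?D ` ?N x) = (?c y, ?D y, ?D ` ?N y)"
      show "x = y"
      proof (cases x; cases y)
        fix i k assume "x = Inl i" "y = Inl k"
        then show "x = y" using eq Inl_eqI[of i k] by simp
      next
        fix i k assume "x = Inl i" "y = Inr k"
        then show "x = y" using xy eq Inl_neq_Inr[of i k] by simp
      next
        fix i k assume "x = Inr i" "y = Inl k"
        then show "x = y" using xy eq Inl_neq_Inr[of k i] by simp
      next
        fix i k assume "x = Inr i" "y = Inr k"
        then show "x = y" using xy eq Inr_eqI[of i k] by simp
      qed
    qed
  qed
  have labels: "\<forall>v\<in>?V. ?c v \<in> {1..n - 1}"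
    using assms by (auto split: sum.split)
  show ?thesis
    by (rule Dist_eq_card_twins[OF graph_functigraph[OF graph_complete] _ _ _ labels distinguishing,
          where S = "Inl ` {1..<n}"])
      (auto simp: twins_fg_Inl twins_complete card_image zero_except_first_def)
qed

theorem lemma2p7:
  fixes t :: nat
  assumes "4 \<le> t"
  shows "\<exists>(V :: nat set) E g. connected_graph V E \<and> g \<in> V \<rightarrow> V \<and>
           Dist V E + Dist (fg_V V) (fg_E V E g) = t"
proof (cases "even t")
  case True
  define n where "n = t div 2"
  have n: "2 \<le> n" "t = n + n"
    using assms True by (auto simp: n_def)
  have "Dist {..<n} (complete_adj n) + Dist (fg_V {..<n}) (fg_E {..<n} (complete_adj n) (\<lambda>_. 0)) = t"
    using n by (simp add: Dist_complete Dist_complete_fg_const)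
  moreover have "connected_graph {..<n} (complete_adj n)"
    using n by (simp add: connected_complete)
  moreover have "(\<lambda>_. 0) \<in> {..<n} \<rightarrow> {..<n}"
    using n by simp
  ultimately show ?thesis
    by blast
next
  case False
  define n where "n = (t + 1) div 2"
  have n: "3 \<le> n" "t = n + (n - 1)"
    using assms False by (auto simp: n_def elim!: oddE)
  have "Dist {..<n} (complete_adj n) + Dist (fg_V {..<n}) (fg_E {..<n} (complete_adj n) zero_except_first) = t"
    using n by (simp add: Dist_complete Dist_complete_fg_zero_except_first)
  moreover have "connected_graph {..<n} (complete_adj n)"
    using n by (simp add: connected_complete)
  moreover have "zero_except_first \<in> {..<n} \<rightarrow> {..<n}"
    using n by (simp add: zero_except_first_funcset)
  ultimately show ?thesis
    by blast
qed

end
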